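(* Let $p\geq 2$ be an integer and $r=\lceil\log_2(p-1)\rceil$. For all integers $0\leq q_0,q_1\leq p-1$, all integers $0\leq r_1,r_2\leq r$ with $r_1+r_2=r$, and all integers $m\geq 2\binom{r_1+1}{2}+2\binom{r_2+1}{2}+2$, $$\mathrm{forb}(m,3,F(p-q_0,p,p,p-q_1))\geq \mathrm{forb}(m,3,p\cdot K_2)-\min\{q_0,q_1\}\binom{r_1+1}{2}-\max\{q_0,q_1\}\binom{r_2+1}{2}.$$
   Context: An $s$-matrix is a matrix with entries in $\{0,\dots,s-1\}$; simple means no repeated columns. $F\prec A$ means some submatrix of $A$ is a row/column permutation of $F$. $\mathrm{forb}(m,s,F)$ is the maximum number of columns of an $m$-rowed simple $s$-matrix $A$ with $F\not\prec A$. $F(a,b,c,d)$ is the 2-rowed $(0,1)$-matrix consisting of $a$ columns $\binom{0}{0}$, $b$ columns $\binom{1}{0}$, $c$ columns $\binom{0}{1}$ and $d$ columns $\binom{1}{1}$. $K_2$ is the $2\times4$ matrix of all $(0,1)$-columns of length 2 and $p\cdot K_2$ is the concatenation of $p$ copies of it. *)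

theory Defs
  imports Complex_Main
begin

text \<open>A column of length m is a function nat => nat, zero outside rows 0..m-1.
  A simple m-rowed s-matrix is a finite set of such columns (no repeated columns,
  column order is irrelevant since configurations allow column permutations).\<close>
definition simple_smatrix :: "nat \<Rightarrow> nat \<Rightarrow> (nat \<Rightarrow> nat) set \<Rightarrow> bool" where
  "simple_smatrix m s A \<longleftrightarrow> finite A \<and>
     (\<forall>c\<in>A. (\<forall>i<m. c i < s) \<and> (\<forall>i\<ge>m. c i = 0))"

text \<open>A general k-rowed matrix F is a list of columns (repetitions allowed).\<close>
definition config :: "nat \<Rightarrow> (nat \<Rightarrow> nat) list \<Rightarrow> nat \<Rightarrow> (nat \<Rightarrow> nat) set \<Rightarrow> bool" where
  "config k F m A \<longleftrightarrow> (\<exists>\<rho> \<sigma>. inj_on \<rho> {..<k} \<and> \<rho> ` {..<k} \<subseteq> {..<m} \<and>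
      inj_on \<sigma> {..<length F} \<and> \<sigma> ` {..<length F} \<subseteq> A \<and>
      (\<forall>j<length F. \<forall>i<k. \<sigma> j (\<rho> i) = (F ! j) i))"

definition forb :: "nat \<Rightarrow> nat \<Rightarrow> nat \<Rightarrow> (nat \<Rightarrow> nat) list \<Rightarrow> nat" where
  "forb m s k F = Max {card A | A. simple_smatrix m s A \<and> \<not> config k F m A}"

definition col2 :: "nat \<Rightarrow> nat \<Rightarrow> nat \<Rightarrow> nat" where
  "col2 x y = (\<lambda>i. if i = 0 then x else if i = 1 then y else 0)"

definition Fabcd :: "nat \<Rightarrow> nat \<Rightarrow> nat \<Rightarrow> nat \<Rightarrow> (nat \<Rightarrow> nat) list" where
  "Fabcd a b c d = replicate a (col2 0 0) @ replicate b (col2 1 0) @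
                   replicate c (col2 0 1) @ replicate d (col2 1 1)"

text \<open>p . K_2 = concatenation of p copies of K_2 (same multiset of columns as F(p,p,p,p)).\<close>
definition pK2 :: "nat \<Rightarrow> (nat \<Rightarrow> nat) list" where
  "pK2 p = concat (replicate p [col2 0 0, col2 1 0, col2 0 1, col2 1 1])"

end

theory Submission
  imports Defs
begin

text \<open>
  Upper bound: if \<open>A\<close> avoids \<open>p \<cdot> K_2\<close>, then on every pair of rows some (0,1)-pattern occurs
  fewer than \<open>p\<close> times. At most \<open>(p - 1) \<cdot> C(m, 2)\<close> columns show such a rare pattern somewhere;
  the others, grouped by the set \<open>S\<close> of rows where they are not 2, form \<open>K_2\<close>-free
  (0,1)-matrices on \<open>S\<close>, so there are at most \<open>|S| + 1\<close> of them for each \<open>S\<close>.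

  Lower bound: give each pair of rows \<open>i < j\<close> a designated pattern, namely (0,0) inside the
  first \<open>r1 + 1\<close> rows, (1,1) inside the last \<open>r2 + 1\<close> rows and (0,1) otherwise, with 0 and 1
  exchanged if \<open>q1 < q0\<close>. For every \<open>S\<close> there are \<open>|S| + 1\<close> columns supported on \<open>S\<close> that show
  no designated pattern, and for every pair there are \<open>2^(r1 + r2) \<ge> p - 1\<close> columns that show
  its designated pattern on that pair and nowhere else. Giving each pair \<open>p - 1\<close> such columns,
  less \<open>min q0 q1\<close> resp. \<open>max q0 q1\<close> for pairs inside the two blocks, keeps every designated
  pattern below its multiplicity in \<open>F(p - q0, p, p, p - q1)\<close>; so \<open>F\<close> is avoided, and the
  loss against the upper bound is \<open>min q0 q1 \<cdot> C(r1 + 1, 2) + max q0 q1 \<cdot> C(r2 + 1, 2)\<close>.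
\<close>

section \<open>Columns and two-rowed configurations\<close>

definition columns :: "nat \<Rightarrow> nat \<Rightarrow> (nat \<Rightarrow> nat) set" where
  "columns m s = {c. (\<forall>i<m. c i < s) \<and> (\<forall>i\<ge>m. c i = 0)}"

lemma finite_columns: "finite (columns m s)"
proof (rule finite_subset)
  show "columns m s \<subseteq> {c. \<forall>i. (i \<in> {..<m} \<longrightarrow> c i \<in> {..<s}) \<and> (i \<notin> {..<m} \<longrightarrow> c i = 0)}"
    unfolding columns_def by (auto simp: not_less)
  show "finite \<dots>" by (intro finite_set_of_finite_funs) simp_all
qed

lemma simple_smatrix_iff_subset_columns: "simple_smatrix m s A \<longleftrightarrow> A \<subseteq> columns m s"
  unfolding simple_smatrix_def columns_def using finite_subset[OF _ finite_columns]
  by (auto simp: columns_def)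

lemma finite_forb_cards: "finite {card A | A. simple_smatrix m s A \<and> \<not> config k F m A}"
proof (rule finite_subset)
  show "{card A | A. simple_smatrix m s A \<and> \<not> config k F m A} \<subseteq> card ` Pow (columns m s)"
    by (auto simp: simple_smatrix_iff_subset_columns)
qed (simp add: finite_columns)

lemma card_le_forb: "simple_smatrix m s A \<Longrightarrow> \<not> config k F m A \<Longrightarrow> card A \<le> forb m s k F"
  unfolding forb_def by (rule Max_ge[OF finite_forb_cards]) blast

lemma forb_attained:
  assumes "F \<noteq> []"
  obtains A where "simple_smatrix m s A" "\<not> config k F m A" "card A = forb m s k F"
proof -
  have "simple_smatrix m s {}" "\<not> config k F m {}"
    using assms unfolding simple_smatrix_def config_def by auto
  then have "{card A | A. simple_smatrix m s A \<and> \<not> config k F m A} \<noteq> {}" by blast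
  then have "forb m s k F \<in> {card A | A. simple_smatrix m s A \<and> \<not> config k F m A}"
    unfolding forb_def using finite_forb_cards by (rule Max_in[rotated])
  then obtain A where "simple_smatrix m s A" "\<not> config k F m A" "card A = forb m s k F"
    by auto
  then show ?thesis by (rule that)
qed

definition count_pattern :: "(nat \<Rightarrow> nat) list \<Rightarrow> nat \<times> nat \<Rightarrow> nat" where
  "count_pattern F w = length (filter (\<lambda>f. (f 0, f 1) = w) F)"

lemma count_pattern_conv_card:
  "count_pattern F w = card {n. n < length F \<and> ((F ! n) 0, (F ! n) 1) = w}"
  unfolding count_pattern_def by (rule length_filter_conv_card)

lemma pattern_counts_if_config_2:
  assumes "config 2 F m A" "finite A"
  obtains i j where "i \<noteq> j" "i < m" "j < m"
    "\<And>w. count_pattern F w \<le> card {x\<in>A. (x i, x j) = w}"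
proof -
  obtain \<rho> \<sigma> where \<rho>: "inj_on \<rho> {..<2}" "\<rho> ` {..<2} \<subseteq> {..<m}"
    and \<sigma>: "inj_on \<sigma> {..<length F}" "\<sigma> ` {..<length F} \<subseteq> A"
    and entries: "\<forall>n<length F. \<forall>k<2. \<sigma> n (\<rho> k) = (F ! n) k"
    using assms(1) unfolding config_def by (elim exE conjE) (rule that)
  have "\<rho> 0 \<noteq> \<rho> 1" using inj_on_contraD[OF \<rho>(1), of 0 1] by simp
  moreover have "\<rho> 0 < m" "\<rho> 1 < m" using \<rho>(2) by (simp_all add: image_subset_iff)
  moreover have "count_pattern F w \<le> card {x\<in>A. (x (\<rho> 0), x (\<rho> 1)) = w}" for w
  proof -
    let ?N = "{n. n < length F \<and> ((F ! n) 0, (F ! n) 1) = w}"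
    have "\<sigma> ` ?N \<subseteq> {x\<in>A. (x (\<rho> 0), x (\<rho> 1)) = w}"
      using \<sigma>(2) entries by fastforce
    moreover have "inj_on \<sigma> ?N" using \<sigma>(1) by (rule inj_on_subset) blast
    ultimately show ?thesis
      unfolding count_pattern_conv_card using assms(2) by (intro card_inj_on_le) simp_all
  qed
  ultimately show ?thesis by (rule that)
qed

lemma config_2_if_pattern_counts:
  assumes "i \<noteq> j" "i < m" "j < m" "finite A"
    and counts: "\<And>w. count_pattern F w \<le> card {x\<in>A. (x i, x j) = w}"
  shows "config 2 F m A"
proof -
  define pat where "pat n = ((F ! n) 0, (F ! n) 1)" for n
  define N where "N w = {n. n < length F \<and> pat n = w}" for w
  define T where "T w = {x\<in>A. (x i, x j) = w}" for w
  have "\<exists>g. inj_on g (N w) \<and> g ` N w \<subseteq> T w" for w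
    using counts[of w] assms(4) card_le_inj[of "N w" "T w"]
    unfolding N_def T_def pat_def count_pattern_conv_card by auto
  then obtain g where g: "\<And>w. inj_on (g w) (N w)" "\<And>w. g w ` N w \<subseteq> T w" by metis
  define \<sigma> where "\<sigma> n = g (pat n) n" for n
  have \<sigma>T: "\<sigma> n \<in> T (pat n)" if "n < length F" for n
    using g(2) that unfolding \<sigma>_def N_def by blast
  show ?thesis unfolding config_def
  proof (intro exI conjI)
    show "inj_on (\<lambda>k::nat. if k = 0 then i else j) {..<2}"
      "(\<lambda>k::nat. if k = 0 then i else j) ` {..<2} \<subseteq> {..<m}"
      using assms(1-3) by (auto simp: inj_on_def)
    show "inj_on \<sigma> {..<length F}"
    proof (rule inj_onI)
      fix n n' assume n: "n \<in> {..<length F}" "n' \<in> {..<length F}" "\<sigma> n = \<sigma> n'"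
      then have "(\<sigma> n i, \<sigma> n j) = (\<sigma> n' i, \<sigma> n' j)" by simp
      then have "pat n = pat n'" using \<sigma>T[of n] \<sigma>T[of n'] n(1,2) unfolding T_def by simp
      then have "g (pat n) n = g (pat n) n'" using n(3) unfolding \<sigma>_def by simp
      moreover have "n \<in> N (pat n)" "n' \<in> N (pat n)"
        using n(1,2) \<open>pat n = pat n'\<close> unfolding N_def by auto
      ultimately show "n = n'" using g(1)[of "pat n"] by (auto dest: inj_onD)
    qed
    show "\<sigma> ` {..<length F} \<subseteq> A" using \<sigma>T unfolding T_def by auto
    show "\<forall>n<length F. \<forall>k<2. \<sigma> n (if k = 0 then i else j) = (F ! n) k"
      using \<sigma>T unfolding T_def pat_def by (auto simp: less_2_cases_iff)
  qed
qed

lemma count_pattern_pK2: "count_pattern (pK2 p) (u, v) = (if u \<le> 1 \<and> v \<le> 1 then p else 0)"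
  unfolding count_pattern_def pK2_def filter_concat
  by (auto simp: col2_def length_concat sum_list_replicate le_Suc_eq)

lemma count_pattern_Fabcd:
  "count_pattern (Fabcd a b c d) (u, v) =
     (if (u, v) = (0, 0) then a else if (u, v) = (1, 0) then b else
      if (u, v) = (0, 1) then c else if (u, v) = (1, 1) then d else 0)"
  unfolding count_pattern_def Fabcd_def by (auto simp: col2_def filter_replicate)

lemma not_config_2_if_rare_pattern:
  assumes "finite A"
    and symmetric: "\<And>u v. count_pattern F (u, v) = count_pattern F (v, u)"
    and rare: "\<And>i j. i < j \<Longrightarrow> j < m \<Longrightarrow> \<exists>w. card {x\<in>A. (x i, x j) = w} < count_pattern F w"
  shows "\<not> config 2 F m A"
proof
  assume "config 2 F m A"
  then obtain i j where ij: "i \<noteq> j" "i < m" "j < m"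
    and counts: "\<And>w. count_pattern F w \<le> card {x\<in>A. (x i, x j) = w}"
    using pattern_counts_if_config_2[OF _ assms(1)] by blast
  show False
  proof (cases "i < j")
    case True
    then show False using rare[OF True ij(3)] counts by (meson not_le)
  next
    case False
    then obtain u v where "card {x\<in>A. (x j, x i) = (u, v)} < count_pattern F (u, v)"
      using rare[of j i] ij by fastforce
    moreover have "{x\<in>A. (x j, x i) = (u, v)} = {x\<in>A. (x i, x j) = (v, u)}" by auto
    ultimately show False using counts[of "(v, u)"] symmetric[of u v] by simp
  qed
qed

section \<open>The upper bound\<close>

lemma inj_on_fun_upd_fixed: "inj_on (\<lambda>x. x(s := c)) {x. x s = v}"
  by (rule inj_on_inverseI[where g = "\<lambda>x. x(s := v)"]) auto

lemma K2_free_row_deletion_overlap: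
  fixes F :: "(nat \<Rightarrow> nat) set"
  assumes "finite F" "s \<in> S"
    and zero_one: "\<forall>x\<in>F. \<forall>i\<in>S. x i \<le> 1"
    and agree: "\<forall>x\<in>F. \<forall>y\<in>F. \<forall>i. i \<notin> S \<longrightarrow> x i = y i"
    and missing: "\<forall>i\<in>S. \<forall>j\<in>S. i \<noteq> j \<longrightarrow> (\<exists>u\<le>1. \<exists>v\<le>1. \<forall>x\<in>F. (x i, x j) \<noteq> (u, v))"
  shows "card ((\<lambda>x. x(s := 2)) ` {x\<in>F. x s = 0} \<inter> (\<lambda>x. x(s := 2)) ` {x\<in>F. x s = 1}) \<le> 1"
proof -
  define erase where "erase x = x(s := 2)" for x :: "nat \<Rightarrow> nat"
  define F0 where "F0 = {x\<in>F. x s = 0}"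
  define F1 where "F1 = {x\<in>F. x s = 1}"
  have "y = z" if y: "y \<in> erase ` F0 \<inter> erase ` F1" and z: "z \<in> erase ` F0 \<inter> erase ` F1" for y z
  proof (rule ccontr)
    assume "y \<noteq> z"
    then obtain i where "y i \<noteq> z i" by auto
    obtain x0 x1 w0 w1 where x: "x0 \<in> F0" "x1 \<in> F1" "y = erase x0" "y = erase x1"
      and w: "w0 \<in> F0" "w1 \<in> F1" "z = erase w0" "z = erase w1"
      using y z by blast
    have "i \<noteq> s" using \<open>y i \<noteq> z i\<close> x(3) w(3) unfolding erase_def by auto
    then have vals: "x0 i = y i" "x1 i = y i" "w0 i = z i" "w1 i = z i"
      using fun_cong[OF x(3), of i] fun_cong[OF x(4), of i] fun_cong[OF w(3), of i]
        fun_cong[OF w(4), of i] unfolding erase_def by auto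
    have "i \<in> S"
    proof (rule ccontr)
      assume "i \<notin> S"
      then have "x0 i = w0 i" using agree x(1) w(1) unfolding F0_def by blast
      then show False using vals \<open>y i \<noteq> z i\<close> by simp
    qed
    then have "x0 i \<le> 1" "w0 i \<le> 1" using zero_one x(1) w(1) unfolding F0_def by blast+
    then have "y i \<le> 1" "z i \<le> 1" using vals by simp_all
    moreover obtain u v where "u \<le> 1" "v \<le> 1" "\<forall>x\<in>F. (x i, x s) \<noteq> (u, v)"
      using missing \<open>i \<in> S\<close> \<open>s \<in> S\<close> \<open>i \<noteq> s\<close> by blast
    \<comment> \<open>\<open>{y i, z i} = {0, 1}\<close>, so \<open>x0, x1, w0, w1\<close> show all four patterns on rows \<open>i, s\<close>\<close>
    ultimately show False
      using x(1,2) w(1,2) vals \<open>y i \<noteq> z i\<close> unfolding F0_def F1_def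
      by (metis (mono_tags, lifting) le_Suc_eq le_zero_eq mem_Collect_eq One_nat_def)
  qed
  moreover have "finite (erase ` F0 \<inter> erase ` F1)" using assms(1) unfolding F0_def by simp
  ultimately have "card (erase ` F0 \<inter> erase ` F1) \<le> Suc 0"
    using card_le_Suc0_iff_eq by blast
  then show ?thesis unfolding erase_def F0_def F1_def by simp
qed

text \<open>The bound forb(|S|, K_2) = |S| + 1 for (0,1)-matrices on the rows S.\<close>

lemma K2_free_card_le:
  fixes F :: "(nat \<Rightarrow> nat) set"
  assumes "finite S" "finite F"
    and "\<forall>x\<in>F. \<forall>i\<in>S. x i \<le> 1"
    and "\<forall>x\<in>F. \<forall>y\<in>F. \<forall>i. i \<notin> S \<longrightarrow> x i = y i"
    and "\<forall>i\<in>S. \<forall>j\<in>S. i \<noteq> j \<longrightarrow> (\<exists>u\<le>1. \<exists>v\<le>1. \<forall>x\<in>F. (x i, x j) \<noteq> (u, v))"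
  shows "card F \<le> card S + 1"
  using assms
proof (induction S arbitrary: F rule: finite_induct)
  case empty
  then have "card F \<le> Suc 0" by (subst card_le_Suc0_iff_eq) auto
  then show ?case by simp
next
  case (insert s S)
  define erase where "erase x = x(s := 2)" for x :: "nat \<Rightarrow> nat"
  define F0 where "F0 = {x\<in>F. x s = 0}"
  define F1 where "F1 = {x\<in>F. x s = 1}"
  have F_split: "F = F0 \<union> F1" "F0 \<inter> F1 = {}" "finite F0" "finite F1"
    using insert.prems(1,2) unfolding F0_def F1_def by fastforce+
  have "inj_on erase F0" "inj_on erase F1"
    unfolding erase_def F0_def F1_def by (auto intro: inj_on_subset[OF inj_on_fun_upd_fixed])
  then have card_F: "card F = card (erase ` F0) + card (erase ` F1)"
    using F_split by (simp add: card_Un_disjoint card_image)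
  have "card (erase ` F) \<le> card S + 1"
  proof (rule insert.IH)
    show "finite (erase ` F)" using insert.prems(1) by simp
    show "\<forall>x\<in>erase ` F. \<forall>i\<in>S. x i \<le> 1"
      using insert.prems(2) insert.hyps(2) unfolding erase_def by auto
    show "\<forall>x\<in>erase ` F. \<forall>y\<in>erase ` F. \<forall>i. i \<notin> S \<longrightarrow> x i = y i"
      using insert.prems(3) unfolding erase_def by auto
    show "\<forall>i\<in>S. \<forall>j\<in>S. i \<noteq> j \<longrightarrow> (\<exists>u\<le>1. \<exists>v\<le>1. \<forall>x\<in>erase ` F. (x i, x j) \<noteq> (u, v))"
    proof (intro ballI impI)
      fix i j assume ij: "i \<in> S" "j \<in> S" "i \<noteq> j"
      then obtain u v where "u \<le> 1" "v \<le> 1" "\<forall>x\<in>F. (x i, x j) \<noteq> (u, v)"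
        using insert.prems(4) by blast
      moreover have "i \<noteq> s" "j \<noteq> s" using ij(1,2) insert.hyps(2) by auto
      ultimately show "\<exists>u\<le>1. \<exists>v\<le>1. \<forall>x\<in>erase ` F. (x i, x j) \<noteq> (u, v)"
        unfolding erase_def by auto
    qed
  qed
  moreover have "card (erase ` F0 \<inter> erase ` F1) \<le> 1"
    using K2_free_row_deletion_overlap[OF insert.prems(1) insertI1 insert.prems(2-4)]
    unfolding erase_def F0_def F1_def .
  ultimately have "card F \<le> card S + 2"
    using card_F F_split card_Un_Int[of "erase ` F0" "erase ` F1"] by (simp add: image_Un)
  then show ?case using insert.hyps by simp
qed

lemma card_pairs_between: "card {(i, j). b \<le> i \<and> i < j \<and> j < e} = (e - b) choose 2"
proof (induction e)
  case 0
  then show ?case by simp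
next
  case (Suc e)
  show ?case
  proof (cases "b \<le> e")
    case True
    have split: "{(i, j). b \<le> i \<and> i < j \<and> j < Suc e} =
        {(i, j). b \<le> i \<and> i < j \<and> j < e} \<union> (\<lambda>i. (i, e)) ` {b..<e}"
      by auto
    have "finite {(i, j). b \<le> i \<and> i < j \<and> j < e}"
      by (rule finite_subset[of _ "{..<e} \<times> {..<e}"]) auto
    then have "card {(i, j). b \<le> i \<and> i < j \<and> j < Suc e} =
        card {(i, j). b \<le> i \<and> i < j \<and> j < e} + card ((\<lambda>i. (i, e)) ` {b..<e})"
      unfolding split by (intro card_Un_disjoint) auto
    also have "\<dots> = ((e - b) choose 2) + (e - b)"
      using Suc.IH by (simp add: card_image inj_on_def)
    also have "\<dots> = Suc (e - b) choose 2"
      by (simp add: numeral_2_eq_2)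
    also have "\<dots> = (Suc e - b) choose 2"
      using True by (simp add: Suc_diff_le)
    finally show ?thesis .
  next
    case False
    then have "{(i, j). b \<le> i \<and> i < j \<and> j < Suc e} = {}" "Suc e - b = 0" by auto
    then show ?thesis by (simp only:) simp
  qed
qed

lemma card_pairs: "card {(i, j). i < j \<and> j < m} = m choose 2"
  using card_pairs_between[of 0 m] by simp

lemma finite_pairs: "finite {(i, j). i < j \<and> (j::nat) < m}"
  by (rule finite_subset[of _ "{..<m} \<times> {..<m}"]) auto

lemma sum_if_const_eq_mult_card:
  "finite P \<Longrightarrow> (\<Sum>x\<in>P. if Q x then s else 0) = s * card {x\<in>P. Q x}"
  by (simp add: sum.inter_filter[symmetric])

lemma sum_block_weights:
  fixes s t :: nat
  assumes "a \<le> b" "b \<le> m"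
  shows "(\<Sum>(i, j)\<in>{(i, j). i < j \<and> j < m}. if j < a then s else if b \<le> i then t else 0) =
    s * (a choose 2) + t * ((m - b) choose 2)"
proof -
  let ?P = "{(i, j). i < j \<and> j < m}"
  have "(\<Sum>(i, j)\<in>?P. if j < a then s else if b \<le> i then t else 0) =
      (\<Sum>ij\<in>?P. if snd ij < a then s else 0) + (\<Sum>ij\<in>?P. if b \<le> fst ij then t else 0)"
    using assms by (subst sum.distrib[symmetric]) (auto intro!: sum.cong)
  also have "\<dots> = s * card {ij\<in>?P. snd ij < a} + t * card {ij\<in>?P. b \<le> fst ij}"
    using finite_pairs by (simp add: sum_if_const_eq_mult_card)
  also have "{ij\<in>?P. snd ij < a} = {(i, j). 0 \<le> i \<and> i < j \<and> j < a}"
    using assms by auto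
  also have "{ij\<in>?P. b \<le> fst ij} = {(i, j). b \<le> i \<and> i < j \<and> j < m}"
    by auto
  finally show ?thesis by (simp only: card_pairs_between diff_zero)
qed

lemma card_support_class_le:
  assumes "A \<subseteq> columns m 3" "S \<subseteq> {..<m}"
    and missing: "\<And>i j. i < j \<Longrightarrow> j < m \<Longrightarrow> \<exists>u\<le>1. \<exists>v\<le>1. \<forall>x\<in>A. (x i, x j) \<noteq> (u, v)"
  shows "card {x\<in>A. {k. k < m \<and> x k \<noteq> 2} = S} \<le> card S + 1"
proof (rule K2_free_card_le)
  let ?C = "{x\<in>A. {k. k < m \<and> x k \<noteq> 2} = S}"
  show "finite S" using assms(2) finite_subset by auto
  show "finite ?C" using assms(1) finite_subset[OF _ finite_columns] by auto
  show "\<forall>x\<in>?C. \<forall>i\<in>S. x i \<le> 1"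
    using assms(1) unfolding columns_def by fastforce
  show "\<forall>x\<in>?C. \<forall>y\<in>?C. \<forall>i. i \<notin> S \<longrightarrow> x i = y i"
  proof (intro ballI allI impI)
    fix x y i assume x: "x \<in> ?C" and y: "y \<in> ?C" and "i \<notin> S"
    show "x i = y i"
    proof (cases "i < m")
      case True
      then have "x i = 2" "y i = 2" using x y \<open>i \<notin> S\<close> by blast+
      then show ?thesis by simp
    next
      case False
      moreover have "x \<in> columns m 3" "y \<in> columns m 3" using x y assms(1) by auto
      ultimately show ?thesis unfolding columns_def by simp
    qed
  qed
  show "\<forall>i\<in>S. \<forall>j\<in>S. i \<noteq> j \<longrightarrow> (\<exists>u\<le>1. \<exists>v\<le>1. \<forall>x\<in>?C. (x i, x j) \<noteq> (u, v))"
  proof (intro ballI impI)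
    fix i j assume ij: "i \<in> S" "j \<in> S" "i \<noteq> j"
    then have "i < m" "j < m" using assms(2) by auto
    have "\<exists>u\<le>1. \<exists>v\<le>1. \<forall>x\<in>A. (x i, x j) \<noteq> (u, v)"
    proof (cases "i < j")
      case True
      then show ?thesis using missing \<open>j < m\<close> by blast
    next
      case False
      then have "j < i" using ij(3) by simp
      then obtain u v where "u \<le> 1" "v \<le> 1" "\<forall>x\<in>A. (x j, x i) \<noteq> (u, v)"
        using missing \<open>i < m\<close> by blast
      then show ?thesis by (intro exI[of _ v] conjI exI[of _ u]) auto
    qed
    then show "\<exists>u\<le>1. \<exists>v\<le>1. \<forall>x\<in>?C. (x i, x j) \<noteq> (u, v)" by blast
  qed
qed

lemma card_le_if_patterns_missing:
  assumes "A \<subseteq> columns m 3"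
    and "\<And>i j. i < j \<Longrightarrow> j < m \<Longrightarrow> \<exists>u\<le>1. \<exists>v\<le>1. \<forall>x\<in>A. (x i, x j) \<noteq> (u, v)"
  shows "card A \<le> (\<Sum>S\<in>Pow {..<m}. card S + 1)"
proof -
  define support where "support x = {k. k < m \<and> x k \<noteq> 2}" for x :: "nat \<Rightarrow> nat"
  have "A \<subseteq> (\<Union>S\<in>Pow {..<m}. {x\<in>A. support x = S})"
  proof
    fix x assume "x \<in> A"
    then show "x \<in> (\<Union>S\<in>Pow {..<m}. {x\<in>A. support x = S})"
      by (intro UN_I[of "support x"]) (auto simp: support_def)
  qed
  then have "card A \<le> card (\<Union>S\<in>Pow {..<m}. {x\<in>A. support x = S})"
    using assms(1) finite_subset[OF _ finite_columns] by (intro card_mono) auto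
  also have "\<dots> \<le> (\<Sum>S\<in>Pow {..<m}. card {x\<in>A. support x = S})"
    by (rule card_UN_le) simp
  also have "\<dots> \<le> (\<Sum>S\<in>Pow {..<m}. card S + 1)"
    unfolding support_def using card_support_class_le[OF assms(1) _ assms(2)]
    by (intro sum_mono) simp
  finally show ?thesis .
qed

lemma card_le_if_rare_patterns:
  assumes "A \<subseteq> columns m 3"
    and rare: "\<And>i j. i < j \<Longrightarrow> j < m \<Longrightarrow> \<exists>u\<le>1. \<exists>v\<le>1. card {x\<in>A. (x i, x j) = (u, v)} < p"
  shows "card A \<le> (\<Sum>S\<in>Pow {..<m}. card S + 1) + (p - 1) * (m choose 2)"
proof -
  let ?P = "{(i, j). i < j \<and> j < m}"
  define d where "d i j = (SOME w. fst w \<le> 1 \<and> snd w \<le> 1 \<and> card {x\<in>A. (x i, x j) = w} < p)" for i j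
  have d: "fst (d i j) \<le> 1 \<and> snd (d i j) \<le> 1 \<and> card {x\<in>A. (x i, x j) = d i j} < p"
    if ij: "i < j" "j < m" for i j
  proof -
    obtain u v where "u \<le> 1" "v \<le> 1" "card {x\<in>A. (x i, x j) = (u, v)} < p"
      using rare[OF ij] by blast
    then have "\<exists>w. fst w \<le> 1 \<and> snd w \<le> 1 \<and> card {x\<in>A. (x i, x j) = w} < p"
      by (intro exI[of _ "(u, v)"]) simp
    then show ?thesis unfolding d_def by (rule someI_ex)
  qed
  define Rare where "Rare = (\<Union>(i, j)\<in>?P. {x\<in>A. (x i, x j) = d i j})"
  have "card (A - Rare) \<le> (\<Sum>S\<in>Pow {..<m}. card S + 1)"
  proof (rule card_le_if_patterns_missing)
    show "A - Rare \<subseteq> columns m 3" using assms(1) by blast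
    fix i j assume ij: "i < j" "j < m"
    obtain u v where uv: "d i j = (u, v)" by (cases "d i j")
    have "\<forall>x\<in>A - Rare. (x i, x j) \<noteq> d i j" using ij unfolding Rare_def by blast
    then show "\<exists>u\<le>1. \<exists>v\<le>1. \<forall>x\<in>A - Rare. (x i, x j) \<noteq> (u, v)"
      using d[OF ij] unfolding uv by (intro exI[of _ u] conjI exI[of _ v]) simp_all
  qed
  moreover have "card Rare \<le> (p - 1) * (m choose 2)"
  proof -
    have "card Rare \<le> (\<Sum>(i, j)\<in>?P. card {x\<in>A. (x i, x j) = d i j})"
      unfolding Rare_def using card_UN_le[OF finite_pairs] by (simp add: case_prod_beta)
    also have "\<dots> \<le> (\<Sum>(i, j)\<in>?P. p - 1)"
      by (rule sum_mono) (use d in \<open>fastforce\<close>)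
    finally show ?thesis by (simp add: card_pairs mult.commute)
  qed
  moreover have "A = (A - Rare) \<union> Rare" unfolding Rare_def by blast
  then have "card A \<le> card (A - Rare) + card Rare" by (metis card_Un_le)
  ultimately show ?thesis by linarith
qed

lemma forb_pK2_le:
  assumes "p \<ge> 1"
  shows "forb m 3 2 (pK2 p) \<le> (\<Sum>S\<in>Pow {..<m}. card S + 1) + (p - 1) * (m choose 2)"
proof -
  have "pK2 p \<noteq> []" using assms unfolding pK2_def by (cases p) auto
  then obtain A where A: "simple_smatrix m 3 A" "\<not> config 2 (pK2 p) m A"
    "card A = forb m 3 2 (pK2 p)"
    by (rule forb_attained)
  have "card A \<le> (\<Sum>S\<in>Pow {..<m}. card S + 1) + (p - 1) * (m choose 2)"
  proof (rule card_le_if_rare_patterns)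
    show columns: "A \<subseteq> columns m 3" using A(1) by (simp add: simple_smatrix_iff_subset_columns)
    fix i j assume ij: "i < j" "j < m"
    show "\<exists>u\<le>1. \<exists>v\<le>1. card {x\<in>A. (x i, x j) = (u, v)} < p"
    proof (rule ccontr)
      assume "\<not> ?thesis"
      then have "count_pattern (pK2 p) w \<le> card {x\<in>A. (x i, x j) = w}" for w
        by (cases w) (auto simp: count_pattern_pK2 not_less)
      then have "config 2 (pK2 p) m A"
        using ij columns finite_subset[OF columns finite_columns]
        by (intro config_2_if_pattern_counts[of i j]) auto
      then show False using A(2) by contradiction
    qed
  qed
  then show ?thesis using A(3) by simp
qed

section \<open>The construction\<close>

definition flip :: "bool \<Rightarrow> nat \<Rightarrow> nat" where
  "flip c v = (if c \<and> v \<le> 1 then 1 - v else v)"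

lemma flip_flip [simp]: "flip c (flip c v) = v"
  unfolding flip_def by auto

lemma flip_le_1: "v \<le> 1 \<Longrightarrow> flip c v \<le> 1"
  unfolding flip_def by auto

lemma flip_less_3: "v < 3 \<Longrightarrow> flip c v < 3"
  unfolding flip_def by auto

lemma flip_eq_self: "1 < v \<Longrightarrow> flip c v = v"
  unfolding flip_def by simp

lemma flip_eq_iff: "flip c u = v \<longleftrightarrow> u = flip c v"
  by (metis flip_flip)

definition designated :: "nat \<Rightarrow> nat \<Rightarrow> nat \<Rightarrow> nat \<Rightarrow> nat \<times> nat" where
  "designated a b i j = (if j < a then (0, 0) else if b \<le> i then (1, 1) else (0, 1))"

lemma designated_le: "fst (designated a b i j) \<le> 1" "snd (designated a b i j) \<le> 1"
  unfolding designated_def by auto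

definition shows_designated :: "nat \<Rightarrow> nat \<Rightarrow> bool \<Rightarrow> (nat \<Rightarrow> nat) \<Rightarrow> nat \<Rightarrow> nat \<Rightarrow> bool" where
  "shows_designated a b c x i j \<longleftrightarrow> (flip c (x i), flip c (x j)) = designated a b i j"

text \<open>Entry 2 marks the rows outside \<open>S\<close>; designated patterns are (0,1)-valued, so such rows
  never show one.\<close>

definition col_on :: "nat \<Rightarrow> nat set \<Rightarrow> (nat \<Rightarrow> nat) \<Rightarrow> nat \<Rightarrow> nat" where
  "col_on m S f i = (if i < m then if i \<in> S then f i else 2 else 0)"

lemma col_on_in_columns: "(\<And>i. i \<in> S \<Longrightarrow> f i < 3) \<Longrightarrow> col_on m S f \<in> columns m 3"
  unfolding columns_def col_on_def by simp

lemma support_col_on: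
  "(\<And>i. i \<in> S \<Longrightarrow> f i \<le> 1) \<Longrightarrow> {i. i < m \<and> col_on m S f i \<noteq> 2} = S \<inter> {..<m}"
  unfolding col_on_def by force

lemma shows_designated_col_on:
  assumes "k < m" "l < m"
  shows "shows_designated a b c (col_on m S (\<lambda>i. flip c (g i))) k l \<longleftrightarrow>
    k \<in> S \<and> l \<in> S \<and> (g k, g l) = designated a b k l"
  using assms designated_le[of a b k l] flip_eq_self[of 2 c]
  unfolding shows_designated_def col_on_def by (auto simp: prod_eq_iff)

text \<open>For \<open>t \<in> S \<union> {m}\<close> these are the \<open>|S| + 1\<close> columns of a \<open>K_2\<close>-free family on \<open>S\<close> that
  avoids all designated patterns.\<close>

definition base_bit :: "nat \<Rightarrow> nat \<Rightarrow> nat \<Rightarrow> nat \<Rightarrow> nat" where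
  "base_bit a b t i =
    (if t < a then (if i < a \<and> i \<noteq> t then 1 else 0)
     else if t < b then (if i < a \<or> (i < b \<and> i < t) then 1 else 0)
     else (if i < b \<or> i = t then 1 else 0))"

lemma base_bit_le: "base_bit a b t i \<le> 1"
  unfolding base_bit_def by simp

lemma base_bit_not_designated:
  "a \<le> b \<Longrightarrow> i < j \<Longrightarrow> (base_bit a b t i, base_bit a b t j) \<noteq> designated a b i j"
  unfolding base_bit_def designated_def by auto

lemma base_bit_separates: "a \<le> b \<Longrightarrow> t < t' \<Longrightarrow> base_bit a b t t \<noteq> base_bit a b t' t"
  unfolding base_bit_def by auto

definition base_col :: "nat \<Rightarrow> nat \<Rightarrow> nat \<Rightarrow> bool \<Rightarrow> nat set \<Rightarrow> nat \<Rightarrow> nat \<Rightarrow> nat" where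
  "base_col m a b c S t = col_on m S (\<lambda>i. flip c (base_bit a b t i))"

definition base_cols :: "nat \<Rightarrow> nat \<Rightarrow> nat \<Rightarrow> bool \<Rightarrow> (nat \<Rightarrow> nat) set" where
  "base_cols m a b c = (\<Union>S\<in>Pow {..<m}. base_col m a b c S ` insert m S)"

lemma base_cols_subset_columns: "base_cols m a b c \<subseteq> columns m 3"
  unfolding base_cols_def base_col_def
  by (auto intro!: col_on_in_columns flip_less_3 le_less_trans[OF base_bit_le])

lemma base_cols_not_designated:
  "a \<le> b \<Longrightarrow> x \<in> base_cols m a b c \<Longrightarrow> i < j \<Longrightarrow> j < m \<Longrightarrow> \<not> shows_designated a b c x i j"
  unfolding base_cols_def base_col_def
  by (auto simp: shows_designated_col_on base_bit_not_designated)

lemma inj_on_base_col: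
  assumes "a \<le> b" "S \<subseteq> {..<m}"
  shows "inj_on (base_col m a b c S) (insert m S)"
proof -
  have "base_col m a b c S t \<noteq> base_col m a b c S t'"
    if "t \<in> insert m S" "t' \<in> insert m S" "t < t'" for t t'
  proof -
    have "t \<in> S" "t < m" using that assms(2) by auto
    then have "base_col m a b c S t t \<noteq> base_col m a b c S t' t"
      using base_bit_separates[OF assms(1) \<open>t < t'\<close>]
      unfolding base_col_def col_on_def by (metis flip_flip)
    then show ?thesis by metis
  qed
  then show ?thesis by (metis inj_onI linorder_neqE_nat)
qed

lemma card_base_cols:
  assumes "a \<le> b"
  shows "card (base_cols m a b c) = (\<Sum>S\<in>Pow {..<m}. card S + 1)"
proof -
  have support: "{i. i < m \<and> x i \<noteq> 2} = S"
    if S: "S \<subseteq> {..<m}" and x: "x \<in> base_col m a b c S ` insert m S" for x S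
  proof -
    obtain t where x_eq: "x = base_col m a b c S t" using x by blast
    have "{i. i < m \<and> x i \<noteq> 2} = S \<inter> {..<m}"
      unfolding x_eq base_col_def by (rule support_col_on) (rule flip_le_1[OF base_bit_le])
    then show ?thesis using S by blast
  qed
  have "card (base_cols m a b c) = (\<Sum>S\<in>Pow {..<m}. card (base_col m a b c S ` insert m S))"
    unfolding base_cols_def
  proof (rule card_UN_disjoint)
    show "\<forall>S\<in>Pow {..<m}. \<forall>S'\<in>Pow {..<m}. S \<noteq> S' \<longrightarrow>
        base_col m a b c S ` insert m S \<inter> base_col m a b c S' ` insert m S' = {}"
    proof (intro ballI impI equals0I)
      fix S S' x assume "S \<in> Pow {..<m}" "S' \<in> Pow {..<m}" "S \<noteq> S'"
        and "x \<in> base_col m a b c S ` insert m S \<inter> base_col m a b c S' ` insert m S'"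
      then show False using support[of S x] support[of S' x] by auto
    qed
  qed (auto intro: finite_subset[OF _ finite_lessThan])
  also have "\<dots> = (\<Sum>S\<in>Pow {..<m}. card S + 1)"
  proof (rule sum.cong)
    fix S assume "S \<in> Pow {..<m}"
    then have S: "S \<subseteq> {..<m}" "finite S" "m \<notin> S" by (auto intro: finite_subset)
    have "card (base_col m a b c S ` insert m S) = card (insert m S)"
      by (rule card_image[OF inj_on_base_col[OF assms S(1)]])
    then show "card (base_col m a b c S ` insert m S) = card S + 1"
      using S by simp
  qed simp
  finally show ?thesis .
qed

text \<open>Apart from rows \<open>i\<close> and \<open>j\<close>, each row gets a value that never completes a designated
  pattern, or 2 if there is none (middle rows strictly between \<open>i\<close> and \<open>j\<close>). Blanking any set of
  rows of the two blocks to 2 preserves this, which yields \<open>2^(a + (m - b) - 2)\<close> columns per pair.\<close>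

definition ext_template :: "nat \<Rightarrow> nat \<Rightarrow> nat \<Rightarrow> nat \<Rightarrow> nat \<Rightarrow> nat" where
  "ext_template a b i j k =
    (if k = i then fst (designated a b i j) else if k = j then snd (designated a b i j)
     else if k < a then 1 else if b \<le> k then 0
     else if k < i then 1 else if k < j then 2 else 0)"

lemma ext_template_le: "ext_template a b i j k \<le> 2"
  unfolding ext_template_def designated_def by simp

lemma ext_template_not_designated:
  assumes "a \<le> b" "i < j" "k < l" "(k, l) \<noteq> (i, j)"
    and "ext_template a b i j k \<noteq> 2" "ext_template a b i j l \<noteq> 2"
  shows "(ext_template a b i j k, ext_template a b i j l) \<noteq> designated a b k l"
  using assms unfolding ext_template_def designated_def by (auto split: if_splits)

definition free_rows :: "nat \<Rightarrow> nat \<Rightarrow> nat \<Rightarrow> nat \<Rightarrow> nat \<Rightarrow> nat set" where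
  "free_rows m a b i j = {k. k < m \<and> k \<noteq> i \<and> k \<noteq> j \<and> ext_template a b i j k \<noteq> 2}"

definition ext_col :: "nat \<Rightarrow> nat \<Rightarrow> nat \<Rightarrow> bool \<Rightarrow> nat \<Rightarrow> nat \<Rightarrow> nat set \<Rightarrow> nat \<Rightarrow> nat" where
  "ext_col m a b c i j U = col_on m (insert i (insert j U)) (\<lambda>k. flip c (ext_template a b i j k))"

definition ext_cols :: "nat \<Rightarrow> nat \<Rightarrow> nat \<Rightarrow> bool \<Rightarrow> nat \<Rightarrow> nat \<Rightarrow> (nat \<Rightarrow> nat) set" where
  "ext_cols m a b c i j = ext_col m a b c i j ` Pow (free_rows m a b i j)"

lemma ext_cols_subset_columns: "ext_cols m a b c i j \<subseteq> columns m 3"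
  unfolding ext_cols_def ext_col_def
  by (auto intro!: col_on_in_columns flip_less_3 le_less_trans[OF ext_template_le])

lemma ext_cols_designated:
  "x \<in> ext_cols m a b c i j \<Longrightarrow> i < j \<Longrightarrow> j < m \<Longrightarrow> shows_designated a b c x i j"
  unfolding ext_cols_def ext_col_def
  by (auto simp: shows_designated_col_on ext_template_def)

lemma ext_cols_not_designated:
  assumes "a \<le> b" "x \<in> ext_cols m a b c i j" "i < j" "k < l" "l < m" "(k, l) \<noteq> (i, j)"
  shows "\<not> shows_designated a b c x k l"
proof -
  obtain U where U: "U \<subseteq> free_rows m a b i j" "x = ext_col m a b c i j U"
    using assms(2) unfolding ext_cols_def by blast
  have not_2: "ext_template a b i j r \<noteq> 2" if "r \<in> insert i (insert j U)" for r
    using that U(1) designated_le[of a b i j] unfolding free_rows_def ext_template_def by auto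
  show ?thesis
  proof
    assume "shows_designated a b c x k l"
    then have "k \<in> insert i (insert j U)" "l \<in> insert i (insert j U)"
      "(ext_template a b i j k, ext_template a b i j l) = designated a b k l"
      using assms(4,5) unfolding U(2) ext_col_def by (simp_all add: shows_designated_col_on)
    then show False using ext_template_not_designated[OF assms(1,3,4,6)] not_2 by blast
  qed
qed

lemma card_ext_cols:
  assumes "i < m" "j < m"
  shows "card (ext_cols m a b c i j) = 2 ^ card (free_rows m a b i j)"
proof -
  have "inj_on (ext_col m a b c i j) (Pow (free_rows m a b i j))"
  proof (rule inj_onI, rule ccontr)
    fix U V assume UV: "U \<in> Pow (free_rows m a b i j)" "V \<in> Pow (free_rows m a b i j)"
      "ext_col m a b c i j U = ext_col m a b c i j V" "U \<noteq> V"
    then obtain k where k: "k \<in> free_rows m a b i j" "k \<in> U \<longleftrightarrow> k \<notin> V" by blast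
    then have "ext_template a b i j k \<noteq> 2" "k < m" "k \<noteq> i" "k \<noteq> j"
      unfolding free_rows_def by auto
    then have "ext_col m a b c i j U k \<noteq> ext_col m a b c i j V k"
      using k(2) flip_le_1[of "ext_template a b i j k" c] ext_template_le[of a b i j k]
      unfolding ext_col_def col_on_def by auto
    then show False using UV(3) by simp
  qed
  moreover have "finite (free_rows m a b i j)" unfolding free_rows_def by simp
  ultimately show ?thesis unfolding ext_cols_def by (simp add: card_image card_Pow)
qed

lemma card_free_rows:
  assumes "a \<le> b" "b \<le> m"
  shows "a + (m - b) - 2 \<le> card (free_rows m a b i j)"
proof -
  have "({..<a} \<union> {b..<m}) - {i, j} \<subseteq> free_rows m a b i j"
    using assms unfolding free_rows_def ext_template_def by auto
  then have "card (({..<a} \<union> {b..<m}) - {i, j}) \<le> card (free_rows m a b i j)"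
    by (rule card_mono[rotated]) (simp add: free_rows_def)
  moreover have "card ({..<a} \<union> {b..<m}) = a + (m - b)"
    using assms by (subst card_Un_disjoint) auto
  moreover have "card ({..<a} \<union> {b..<m}) - 2 \<le> card (({..<a} \<union> {b..<m}) - {i, j})"
    using diff_card_le_card_Diff[of "{i, j}" "{..<a} \<union> {b..<m}"] card_insert_le_m1[of 2 "{j}" i]
    by simp
  ultimately show ?thesis by linarith
qed

lemma ext_cols_designated_iff:
  assumes "a \<le> b" "x \<in> ext_cols m a b c i j" "i < j" "j < m" "k < l" "l < m"
  shows "shows_designated a b c x k l \<longleftrightarrow> (k, l) = (i, j)"
  using ext_cols_designated[OF assms(2-4)] ext_cols_not_designated[OF assms(1,2,3,5,6)] by blast

lemma ext_subfamilies_exist: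
  fixes bud :: "nat \<Rightarrow> nat \<Rightarrow> nat"
  assumes "a \<le> b" "b \<le> m"
    and budget: "\<And>i j. i < j \<Longrightarrow> j < m \<Longrightarrow> bud i j \<le> 2 ^ (a + (m - b) - 2)"
  obtains E where "\<And>i j. i < j \<Longrightarrow> j < m \<Longrightarrow> E i j \<subseteq> ext_cols m a b c i j"
    "\<And>i j. i < j \<Longrightarrow> j < m \<Longrightarrow> card (E i j) = bud i j"
proof -
  define E where "E i j = (SOME E. E \<subseteq> ext_cols m a b c i j \<and> card E = bud i j)" for i j
  have "E i j \<subseteq> ext_cols m a b c i j \<and> card (E i j) = bud i j" if ij: "i < j" "j < m" for i j
  proof -
    have "bud i j \<le> 2 ^ card (free_rows m a b i j)"
      using budget[OF ij] card_free_rows[OF assms(1,2)]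
      by (meson le_trans one_le_numeral power_increasing)
    then have "bud i j \<le> card (ext_cols m a b c i j)" using ij by (simp add: card_ext_cols)
    then have "\<exists>E. E \<subseteq> ext_cols m a b c i j \<and> card E = bud i j"
      by (meson obtain_subset_with_card_n)
    then show ?thesis unfolding E_def by (rule someI_ex)
  qed
  then show ?thesis using that by blast
qed

lemma shows_designated_UN_ext_subfamilies:
  assumes "a \<le> b" and E: "\<And>i j. i < j \<Longrightarrow> j < m \<Longrightarrow> E i j \<subseteq> ext_cols m a b c i j"
    and "i < j" "j < m"
  shows "{x \<in> (\<Union>(k, l)\<in>{(k, l). k < l \<and> l < m}. E k l). shows_designated a b c x i j} = E i j"
proof (intro equalityI subsetI)
  fix x assume "x \<in> {x \<in> (\<Union>(k, l)\<in>{(k, l). k < l \<and> l < m}. E k l). shows_designated a b c x i j}"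
  then obtain k l where kl: "k < l" "l < m" and "x \<in> E k l" "shows_designated a b c x i j"
    by blast
  moreover have "x \<in> ext_cols m a b c k l" using E[OF kl] \<open>x \<in> E k l\<close> by blast
  ultimately show "x \<in> E i j"
    using ext_cols_designated_iff[OF assms(1) _ kl assms(3,4)] by blast
next
  fix x assume "x \<in> E i j"
  then show "x \<in> {x \<in> (\<Union>(k, l)\<in>{(k, l). k < l \<and> l < m}. E k l). shows_designated a b c x i j}"
    using ext_cols_designated E assms(3,4) by blast
qed

lemma card_UN_ext_subfamilies:
  assumes "a \<le> b" and E: "\<And>i j. i < j \<Longrightarrow> j < m \<Longrightarrow> E i j \<subseteq> ext_cols m a b c i j"
  shows "card (\<Union>(i, j)\<in>{(i, j). i < j \<and> j < m}. E i j) =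
    (\<Sum>(i, j)\<in>{(i, j). i < j \<and> j < m}. card (E i j))"
proof -
  let ?P = "{(i, j). i < j \<and> j < m}"
  have "card (\<Union>(i, j)\<in>?P. E i j) = (\<Sum>ij\<in>?P. card (case ij of (i, j) \<Rightarrow> E i j))"
  proof (rule card_UN_disjoint)
    show "\<forall>ij\<in>?P. finite (case ij of (i, j) \<Rightarrow> E i j)"
    proof
      fix ij assume "ij \<in> ?P"
      then obtain i j where ij: "ij = (i, j)" "i < j" "j < m" by blast
      have "finite (E i j)"
        using E[OF ij(2,3)] ext_cols_subset_columns finite_columns
        by (meson finite_subset subset_trans)
      then show "finite (case ij of (i, j) \<Rightarrow> E i j)" using ij(1) by simp
    qed
    show "\<forall>ij\<in>?P. \<forall>kl\<in>?P. ij \<noteq> kl \<longrightarrow>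
        (case ij of (i, j) \<Rightarrow> E i j) \<inter> (case kl of (i, j) \<Rightarrow> E i j) = {}"
    proof (intro ballI impI equals0I)
      fix ij kl x assume "ij \<in> ?P" "kl \<in> ?P" "ij \<noteq> kl"
        and "x \<in> (case ij of (i, j) \<Rightarrow> E i j) \<inter> (case kl of (i, j) \<Rightarrow> E i j)"
      then obtain i j k l where ij: "i < j" "j < m" and kl: "k < l" "l < m"
        and "(i, j) \<noteq> (k, l)" "x \<in> E i j" "x \<in> E k l"
        by (cases ij, cases kl) auto
      moreover have "shows_designated a b c x k l"
        using ext_cols_designated[OF subsetD[OF E[OF kl] \<open>x \<in> E k l\<close>] kl] .
      ultimately show False
        using ext_cols_designated_iff[OF assms(1) _ ij kl] E[OF ij] by blast
    qed
  qed (rule finite_pairs)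
  then show ?thesis by (simp add: case_prod_beta)
qed

text \<open>Base columns, plus for each pair \<open>bud i j\<close> columns showing its designated pattern
  there and nowhere else.\<close>

lemma designated_budget_matrix:
  fixes bud :: "nat \<Rightarrow> nat \<Rightarrow> nat"
  assumes "a \<le> b" "b \<le> m"
    and budget: "\<And>i j. i < j \<Longrightarrow> j < m \<Longrightarrow> bud i j \<le> 2 ^ (a + (m - b) - 2)"
  obtains A where "A \<subseteq> columns m 3"
    "card A = (\<Sum>S\<in>Pow {..<m}. card S + 1) + (\<Sum>(i, j)\<in>{(i, j). i < j \<and> j < m}. bud i j)"
    "\<And>i j. i < j \<Longrightarrow> j < m \<Longrightarrow> card {x\<in>A. shows_designated a b c x i j} \<le> bud i j"
proof -
  let ?P = "{(i, j). i < j \<and> j < m}"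
  obtain E where E: "\<And>i j. i < j \<Longrightarrow> j < m \<Longrightarrow> E i j \<subseteq> ext_cols m a b c i j"
    and card_E: "\<And>i j. i < j \<Longrightarrow> j < m \<Longrightarrow> card (E i j) = bud i j"
  proof (rule ext_subfamilies_exist[OF assms(1,2), where c = c])
    show "bud i j \<le> 2 ^ (a + (m - b) - 2)" if "i < j" "j < m" for i j
      using budget that .
  qed (rule that)
  define Ext where "Ext = (\<Union>(i, j)\<in>?P. E i j)"
  have Ext_columns: "Ext \<subseteq> columns m 3"
    unfolding Ext_def using E ext_cols_subset_columns by fastforce
  have "base_cols m a b c \<inter> Ext = {}"
    using base_cols_not_designated[OF assms(1)] ext_cols_designated E unfolding Ext_def by fast
  then have designated_in_A: "{x \<in> base_cols m a b c \<union> Ext. shows_designated a b c x i j} = E i j"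
    if "i < j" "j < m" for i j
    using shows_designated_UN_ext_subfamilies[OF assms(1) E that]
      base_cols_not_designated[OF assms(1) _ that]
    unfolding Ext_def by blast
  show ?thesis
  proof
    show "base_cols m a b c \<union> Ext \<subseteq> columns m 3"
      using base_cols_subset_columns Ext_columns by blast
    have "card Ext = (\<Sum>(i, j)\<in>?P. card (E i j))"
      unfolding Ext_def by (rule card_UN_ext_subfamilies[OF assms(1) E])
    also have "\<dots> = (\<Sum>(i, j)\<in>?P. bud i j)"
      using card_E by (intro sum.cong) auto
    moreover have "finite Ext" using Ext_columns finite_columns by (rule finite_subset)
    moreover have "finite (base_cols m a b c)"
      using base_cols_subset_columns finite_columns by (rule finite_subset)
    ultimately show "card (base_cols m a b c \<union> Ext) =
        (\<Sum>S\<in>Pow {..<m}. card S + 1) + (\<Sum>(i, j)\<in>?P. bud i j)"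
      using \<open>base_cols m a b c \<inter> Ext = {}\<close>
      by (simp add: card_Un_disjoint card_base_cols[OF assms(1)])
  next
    fix i j assume "i < j" "j < m"
    then show "card {x \<in> base_cols m a b c \<union> Ext. shows_designated a b c x i j} \<le> bud i j"
      using designated_in_A card_E by simp
  qed
qed

lemma forb_ge_if_budget_below_counts:
  fixes bud :: "nat \<Rightarrow> nat \<Rightarrow> nat"
  assumes "a \<le> b" "b \<le> m"
    and budget: "\<And>i j. i < j \<Longrightarrow> j < m \<Longrightarrow> bud i j \<le> 2 ^ (a + (m - b) - 2)"
    and symmetric: "\<And>u v. count_pattern F (u, v) = count_pattern F (v, u)"
    and below: "\<And>i j. i < j \<Longrightarrow> j < m \<Longrightarrow>
      bud i j < count_pattern F
        (flip c (fst (designated a b i j)), flip c (snd (designated a b i j)))"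
  shows "(\<Sum>S\<in>Pow {..<m}. card S + 1) + (\<Sum>(i, j)\<in>{(i, j). i < j \<and> j < m}. bud i j) \<le> forb m 3 2 F"
proof -
  obtain A where A: "A \<subseteq> columns m 3"
    "card A = (\<Sum>S\<in>Pow {..<m}. card S + 1) + (\<Sum>(i, j)\<in>{(i, j). i < j \<and> j < m}. bud i j)"
    "\<And>i j. i < j \<Longrightarrow> j < m \<Longrightarrow> card {x\<in>A. shows_designated a b c x i j} \<le> bud i j"
  proof (rule designated_budget_matrix[OF assms(1,2), where c = c])
    show "bud i j \<le> 2 ^ (a + (m - b) - 2)" if "i < j" "j < m" for i j
      using budget that .
  qed (rule that)
  have "\<not> config 2 F m A"
  proof (rule not_config_2_if_rare_pattern[OF _ symmetric])
    show "finite A" using A(1) finite_columns by (rule finite_subset)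
    fix i j assume ij: "i < j" "j < m"
    define w where "w = (flip c (fst (designated a b i j)), flip c (snd (designated a b i j)))"
    have "{x\<in>A. (x i, x j) = w} = {x\<in>A. shows_designated a b c x i j}"
      unfolding w_def shows_designated_def by (auto simp: prod_eq_iff flip_eq_iff)
    then have "card {x\<in>A. (x i, x j) = w} < count_pattern F w"
      using A(3)[OF ij] below[OF ij] unfolding w_def by simp
    then show "\<exists>w. card {x\<in>A. (x i, x j) = w} < count_pattern F w" ..
  qed
  then have "card A \<le> forb m 3 2 F"
    using A(1) by (intro card_le_forb) (simp_all add: simple_smatrix_iff_subset_columns)
  then show ?thesis using A(2) by simp
qed

lemma forb_Fabcd_ge:
  assumes q: "q0 < p" "q1 < p"
    and power: "p - 1 \<le> 2 ^ (r1 + r2)" and m: "r1 + r2 + 2 \<le> m"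
  shows "(\<Sum>S\<in>Pow {..<m}. card S + 1) + (p - 1) * (m choose 2) \<le>
    forb m 3 2 (Fabcd (p - q0) p p (p - q1))
      + min q0 q1 * ((r1 + 1) choose 2) + max q0 q1 * ((r2 + 1) choose 2)"
proof -
  let ?P = "{(i, j). i < j \<and> j < m}"
  define a where "a = r1 + 1"
  define b where "b = m - (r2 + 1)"
  define penalty where "penalty i j = (if j < a then min q0 q1 else if b \<le> i then max q0 q1 else 0)"
    for i j :: nat
  define bud where "bud i j = p - 1 - penalty i j" for i j
  have ab: "a \<le> b" "b \<le> m" "a + (m - b) - 2 = r1 + r2" "m - b = r2 + 1"
    using m unfolding a_def b_def by auto
  have "(\<Sum>S\<in>Pow {..<m}. card S + 1) + (\<Sum>(i, j)\<in>?P. bud i j) \<le>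
      forb m 3 2 (Fabcd (p - q0) p p (p - q1))"
  proof (rule forb_ge_if_budget_below_counts[OF ab(1,2), where c = "q1 < q0"])
    show "bud i j \<le> 2 ^ (a + (m - b) - 2)" for i j
      using power unfolding bud_def ab(3) by linarith
    show "count_pattern (Fabcd (p - q0) p p (p - q1)) (u, v) =
        count_pattern (Fabcd (p - q0) p p (p - q1)) (v, u)" for u v
      by (simp add: count_pattern_Fabcd)
    show "bud i j < count_pattern (Fabcd (p - q0) p p (p - q1))
        (flip (q1 < q0) (fst (designated a b i j)), flip (q1 < q0) (snd (designated a b i j)))"
      for i j
      using q unfolding bud_def penalty_def designated_def
      by (auto simp: count_pattern_Fabcd flip_def)
  qed
  moreover have "(\<Sum>(i, j)\<in>?P. bud i j) + (\<Sum>(i, j)\<in>?P. penalty i j) = (p - 1) * (m choose 2)"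
  proof -
    have "bud i j + penalty i j = p - 1" for i j
      using q unfolding bud_def penalty_def by auto
    then have "(\<Sum>(i, j)\<in>?P. bud i j) + (\<Sum>(i, j)\<in>?P. penalty i j) = (\<Sum>(i, j)\<in>?P. p - 1)"
      unfolding sum.distrib[symmetric] by (intro sum.cong) (auto split: prod.splits)
    then show ?thesis by (simp add: card_pairs mult.commute)
  qed
  moreover have "(\<Sum>(i, j)\<in>?P. penalty i j) =
      min q0 q1 * ((r1 + 1) choose 2) + max q0 q1 * ((r2 + 1) choose 2)"
    unfolding penalty_def using sum_block_weights[OF ab(1,2)] ab(4) a_def by simp
  ultimately show ?thesis by linarith
qed

lemma le_two_power_ceiling_log:
  assumes "1 \<le> n"
  shows "n \<le> 2 ^ nat \<lceil>log 2 (real n)\<rceil>"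
proof -
  have "real n = 2 powr log 2 (real n)" using assms by simp
  also have "\<dots> \<le> 2 powr real (nat \<lceil>log 2 (real n)\<rceil>)"
    by (intro powr_mono) linarith+
  also have "\<dots> = real (2 ^ nat \<lceil>log 2 (real n)\<rceil>)" by (simp add: powr_realpow)
  finally show ?thesis by linarith
qed

lemma le_Suc_choose_two: "n \<le> Suc n choose 2"
  by (induction n) (simp_all add: numeral_2_eq_2)

theorem mainTheorem6:
  fixes p q0 q1 r1 r2 m :: nat
  assumes "p \<ge> 2"
    and "q0 \<le> p - 1" and "q1 \<le> p - 1"
    and "r1 + r2 = nat \<lceil>log 2 (real p - 1)\<rceil>"
    and "m \<ge> 2 * ((r1 + 1) choose 2) + 2 * ((r2 + 1) choose 2) + 2"
  shows "int (forb m 3 2 (Fabcd (p - q0) p p (p - q1))) \<ge>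
         int (forb m 3 2 (pK2 p)) - int (min q0 q1 * ((r1 + 1) choose 2))
           - int (max q0 q1 * ((r2 + 1) choose 2))"
proof -
  \<comment> \<open>of the hypothesis on \<open>m\<close>, only \<open>r1 + r2 + 2 \<le> m\<close> is needed\<close>
  have "r1 + r2 + 2 \<le> m"
    using assms(5) le_Suc_choose_two[of r1] le_Suc_choose_two[of r2] by simp
  moreover have "p - 1 \<le> 2 ^ (r1 + r2)"
    using le_two_power_ceiling_log[of "p - 1"] assms(1,4) by (simp add: of_nat_diff)
  ultimately have "forb m 3 2 (pK2 p) \<le> forb m 3 2 (Fabcd (p - q0) p p (p - q1))
      + min q0 q1 * ((r1 + 1) choose 2) + max q0 q1 * ((r2 + 1) choose 2)"
    using forb_pK2_le[of p m] forb_Fabcd_ge[of q0 p q1] assms(1-3) by fastforce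
  then show ?thesis by linarith
qed

end
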